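(* Let $n\ge 1$ and $1\le c\le n$. The minimum algorithm size (MAS) of the $c$-scattering problem ($c$SCT) for a swarm of $n$ robots under the SSYNC scheduler is exactly $c$: there is an algorithm of size $c$ that solves $c$SCT, and no algorithm of size smaller than $c$ solves it.
   Context: Model. A swarm consists of $n\ge1$ robots $r_1,\dots,r_n$, modeled as points in $\mathbb R^2$. Each robot $r_i$ has a local right-handed $x$-$y$ coordinate system $Z_i$ whose origin is always the robot's current position, with arbitrary (adversarially chosen, fixed) unit length and axis orientation; robots do not share coordinate systems. The configuration at time $t$ is the multiset $P_t$ of the $n$ robot positions (robots can detect multiplicities). A target function $\phi$ maps each finite multiset $P$ of points of $\mathbb R^2$ with $(0,0)\in P$ to a point $\phi(P)\in\mathbb R^2$. Time is discrete, $t=0,1,2,\dots$. Under the semi-synchronous (SSYNC) scheduler, at each time $t$ an adversary chooses a set of robots to activate; each activated robot $r_i$ observes $P_t$ expressed in $Z_i$, evaluates its target function on this multiset, and moves to the resulting point (interpreted in $Z_i$), arriving before time $t+1$; non-activated robots do not move. Schedules are fair: every robot is activated infinitely often. An algorithm of size $m$ is a set $\Phi$ of $m$ distinct target functions ($m\le n$); an assignment is a surjection $\mathcal A$ from the robots onto $\Phi$, robot $r_i$ using $\mathcal A(r_i)$. $\Phi$ solves a problem if for every assignment, every choice of local coordinate systems, every initial configuration and every fair SSYNC schedule, the resulting execution solves the problem. The MAS of a problem is the least $m$ such that some algorithm of size $m$ solves it, and $\infty$ if no algorithm of any size $m\le n$ solves it. For a multiset $P$, $\overline P$ denotes its set of distinct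 points. Problem. The $c$-scattering problem ($c$SCT): starting from any initial configuration, the execution must reach a configuration $P$ with $|\overline P|\ge c$. *)

theory Defs
  imports Complex_Main "HOL-Library.Multiset"
begin

text \<open>
  The plane R^2 is modelled by the complex numbers.
  A local right-handed coordinate system of robot i (arbitrary unit length and
  orientation, origin at the robot) is given by a nonzero complex number u i:
  a local point z corresponds to the global point (position of i) + u i * z.
  A target function maps a (finite) multiset of points to a point; only its values
  on multisets containing the origin matter.
\<close>

type_synonym target_fun = "complex multiset \<Rightarrow> complex"

definition config :: "nat \<Rightarrow> (nat \<Rightarrow> complex) \<Rightarrow> complex multiset" where
  "config n p = image_mset p (mset_set {0..<n})"

definition observe :: "complex \<Rightarrow> complex \<Rightarrow> complex multiset \<Rightarrow> complex multiset" where
  "observe x u P = image_mset (\<lambda>q. (q - x) / u) P"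

text \<open>SSYNC execution: A = assignment of target functions, u = local coordinate systems,
  p0 = initial positions, act t = set of robots activated at time t.\<close>
primrec exec :: "nat \<Rightarrow> (nat \<Rightarrow> target_fun) \<Rightarrow> (nat \<Rightarrow> complex) \<Rightarrow> (nat \<Rightarrow> complex)
                 \<Rightarrow> (nat \<Rightarrow> nat set) \<Rightarrow> nat \<Rightarrow> (nat \<Rightarrow> complex)" where
  "exec n A u p0 act 0 = p0"
| "exec n A u p0 act (Suc t) =
     (\<lambda>i. if i \<in> act t \<and> i < n
          then exec n A u p0 act t i
               + u i * A i (observe (exec n A u p0 act t i) (u i) (config n (exec n A u p0 act t)))
          else exec n A u p0 act t i)"

definition fair :: "nat \<Rightarrow> (nat \<Rightarrow> nat set) \<Rightarrow> bool" where
  "fair n act \<longleftrightarrow> (\<forall>i<n. \<forall>t. \<exists>t'\<ge>t. i \<in> act t')"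

definition is_algorithm :: "nat \<Rightarrow> nat \<Rightarrow> target_fun set \<Rightarrow> bool" where
  "is_algorithm n m \<Phi> \<longleftrightarrow> finite \<Phi> \<and> card \<Phi> = m \<and> 1 \<le> m \<and> m \<le> n \<and>
     (\<forall>\<phi>\<in>\<Phi>. \<forall>\<psi>\<in>\<Phi>. \<phi> \<noteq> \<psi> \<longrightarrow> (\<exists>P. 0 \<in># P \<and> \<phi> P \<noteq> \<psi> P))"

definition solves_SCT :: "nat \<Rightarrow> nat \<Rightarrow> target_fun set \<Rightarrow> bool" where
  "solves_SCT n c \<Phi> \<longleftrightarrow>
     (\<forall>A u p0 act. A ` {0..<n} = \<Phi> \<longrightarrow> (\<forall>i<n. u i \<noteq> 0) \<longrightarrow> fair n act \<longrightarrow>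
        (\<exists>t. c \<le> card (set_mset (config n (exec n A u p0 act t)))))"

end

theory Submission
  imports Defs
begin

text \<open>
  Split the robots into c classes; while fewer than c points are occupied, a robot of class k
  moves along its own x-axis by k/(2c) times the minimum distance between occupied points
  (by k of its own units if all robots are gathered). Every move is then shorter than half the
  minimum distance, so occupied points never merge and their number never decreases. As long as
  fewer than c points are occupied, some point hosts two classes; by fairness the robot of the
  larger class eventually moves, which splits the pair.

  Conversely, for an algorithm of size m < c, give all robots the same coordinate system and
  starting point and activate all of them at every step: robots running the same target function
  then never separate, so at most m points are ever occupied.
\<close>

lemma image_factors_through:
  assumes "\<And>i j. i \<in> I \<Longrightarrow> j \<in> I \<Longrightarrow> g i = g j \<Longrightarrow> h i = h j"
  shows "h ` I = (\<lambda>y. h (inv_into I g y)) ` g ` I"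
proof -
  have "h (inv_into I g (g i)) = h i" if "i \<in> I" for i
    using assms that by (metis f_inv_into_f imageI inv_into_into)
  then show ?thesis by (force simp: image_image)
qed

lemma card_image_le_if_factors:
  assumes "finite I" and "\<And>i j. i \<in> I \<Longrightarrow> j \<in> I \<Longrightarrow> g i = g j \<Longrightarrow> h i = h j"
  shows "card (h ` I) \<le> card (g ` I)"
proof -
  have "card ((\<lambda>y. h (inv_into I g y)) ` g ` I) \<le> card (g ` I)"
    using assms(1) by (simp add: card_image_le)
  then show ?thesis by (simp only: image_factors_through[OF assms(2)])
qed

lemma card_image_less_if_factors:
  assumes "finite I" and "\<And>i j. i \<in> I \<Longrightarrow> j \<in> I \<Longrightarrow> g i = g j \<Longrightarrow> h i = h j"
    and "i \<in> I" "j \<in> I" "h i = h j" "g i \<noteq> g j"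
  shows "card (h ` I) < card (g ` I)"
proof -
  let ?F = "\<lambda>y. h (inv_into I g y)"
  have "?F (g i) = ?F (g j)"
    using assms(2-5) by (metis f_inv_into_f imageI inv_into_into)
  then have "\<not> inj_on ?F (g ` I)"
    using assms(3,4,6) by (auto simp: inj_on_def)
  then have "card (?F ` g ` I) \<noteq> card (g ` I)"
    using assms(1) by (simp add: inj_on_iff_eq_card)
  moreover have "card (?F ` g ` I) \<le> card (g ` I)"
    using assms(1) by (simp add: card_image_le)
  ultimately have "card (?F ` g ` I) < card (g ` I)" by linarith
  then show ?thesis by (simp only: image_factors_through[OF assms(2)])
qed

definition min_dist :: "'a::metric_space set \<Rightarrow> real" where
  "min_dist S = Min {dist a b | a b. a \<in> S \<and> b \<in> S \<and> a \<noteq> b}"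

lemma finite_dists:
  "finite S \<Longrightarrow> finite {dist a b | a b. a \<in> S \<and> b \<in> S \<and> a \<noteq> b}"
proof -
  assume "finite S"
  then have "finite ((\<lambda>(a, b). dist a b) ` (S \<times> S))" by simp
  then show ?thesis by (rule rev_finite_subset) auto
qed

lemma min_dist_le_dist:
  assumes "finite S" "a \<in> S" "b \<in> S" "a \<noteq> b"
  shows "min_dist S \<le> dist a b"
  unfolding min_dist_def using assms finite_dists by (intro Min_le) auto

lemma card_ge_2_obtain:
  assumes "finite S" "2 \<le> card S"
  obtains a b where "a \<in> S" "b \<in> S" "a \<noteq> b"
  using assms by (metis card_le_Suc0_iff_eq not_less_eq_eq numeral_2_eq_2)

lemma min_dist_pos:
  assumes "finite S" "2 \<le> card S"
  shows "0 < min_dist S"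
proof -
  obtain a b where "a \<in> S" "b \<in> S" "a \<noteq> b"
    using assms by (rule card_ge_2_obtain)
  then have "min_dist S \<in> {dist a b | a b. a \<in> S \<and> b \<in> S \<and> a \<noteq> b}"
    unfolding min_dist_def using assms(1) finite_dists by (intro Min_in) auto
  then show ?thesis by auto
qed

lemma min_dist_similar_image:
  assumes "finite S" "2 \<le> card S" "0 < r" and dist_f: "\<And>a b. dist (f a) (f b) = r * dist a b"
  shows "min_dist (f ` S) = r * min_dist S"
proof -
  let ?D = "{dist a b | a b. a \<in> S \<and> b \<in> S \<and> a \<noteq> b}"
  have f_eq: "f a = f b \<longleftrightarrow> a = b" for a b
  proof -
    have "dist (f a) (f b) = 0 \<longleftrightarrow> dist a b = 0"
      using \<open>0 < r\<close> by (simp add: dist_f)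
    then show ?thesis by simp
  qed
  have image_dists: "{dist a b | a b. a \<in> f ` S \<and> b \<in> f ` S \<and> a \<noteq> b} = (\<lambda>d. r * d) ` ?D"
  proof (intro equalityI subsetI)
    fix d assume "d \<in> {dist a b | a b. a \<in> f ` S \<and> b \<in> f ` S \<and> a \<noteq> b}"
    then obtain a b where "a \<in> S" "b \<in> S" "a \<noteq> b" "d = dist (f a) (f b)"
      by (auto simp: f_eq)
    then show "d \<in> (\<lambda>d. r * d) ` ?D" by (auto simp: dist_f)
  next
    fix d assume "d \<in> (\<lambda>d. r * d) ` ?D"
    then obtain a b where "a \<in> S" "b \<in> S" "a \<noteq> b" "d = dist (f a) (f b)"
      by (auto simp: dist_f)
    then show "d \<in> {dist a b | a b. a \<in> f ` S \<and> b \<in> f ` S \<and> a \<noteq> b}"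
      by (blast intro: imageI dest: f_eq[THEN iffD1])
  qed
  obtain a b where "a \<in> S" "b \<in> S" "a \<noteq> b"
    using assms(1,2) by (rule card_ge_2_obtain)
  then have "?D \<noteq> {}" by auto
  have "mono (\<lambda>d. r * d)"
    using \<open>0 < r\<close> by (simp add: mono_def)
  from this finite_dists[OF assms(1)] \<open>?D \<noteq> {}\<close>
  have "Min ((\<lambda>d. r * d) ` ?D) = r * Min ?D"
    by (rule mono_Min_commute[symmetric])
  then show ?thesis
    unfolding min_dist_def image_dists .
qed

definition scatter_fun :: "nat \<Rightarrow> nat \<Rightarrow> target_fun" where
  "scatter_fun c k P =
     (if c \<le> card (set_mset P) then 0
      else if card (set_mset P) < 2 then of_nat k
      else of_nat k * of_real (min_dist (set_mset P) / (2 * real c)))"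

lemma set_observe: "set_mset (observe x u P) = (\<lambda>q. (q - x) / u) ` set_mset P"
  by (simp add: observe_def)

lemma card_observe:
  assumes "u \<noteq> 0"
  shows "card (set_mset (observe x u P)) = card (set_mset P)"
proof -
  have "inj_on (\<lambda>q. (q - x) / u) (set_mset P)"
    using assms by (auto simp: inj_on_def)
  then show ?thesis by (simp add: set_observe card_image)
qed

lemma min_dist_observe:
  assumes "u \<noteq> 0" "2 \<le> card (set_mset P)"
  shows "min_dist (set_mset (observe x u P)) = min_dist (set_mset P) / cmod u"
proof -
  have "dist ((a - x) / u) ((b - x) / u) = 1 / cmod u * dist a b" for a b
    by (simp add: dist_norm diff_divide_distrib[symmetric] norm_divide)
  then have "min_dist ((\<lambda>q. (q - x) / u) ` set_mset P) = 1 / cmod u * min_dist (set_mset P)"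
    using assms by (intro min_dist_similar_image) auto
  then show ?thesis by (simp add: set_observe)
qed

lemma scatter_fun_displ_scattered:
  assumes "u \<noteq> 0" "c \<le> card (set_mset P)"
  shows "u * scatter_fun c k (observe x u P) = 0"
  using assms by (simp add: scatter_fun_def card_observe)

lemma scatter_fun_displ_gathered:
  assumes "u \<noteq> 0" "card (set_mset P) < c" "card (set_mset P) < 2"
  shows "u * scatter_fun c k (observe x u P) = u * of_nat k"
  using assms by (simp add: scatter_fun_def card_observe)

lemma norm_scatter_fun_displ:
  assumes "u \<noteq> 0" "card (set_mset P) < c" "2 \<le> card (set_mset P)"
  shows "cmod (u * scatter_fun c k (observe x u P)) = real k * min_dist (set_mset P) / (2 * real c)"
proof -
  let ?m = "min_dist (set_mset P)"
  have "0 < ?m"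
    using assms(3) by (intro min_dist_pos) auto
  have "u * scatter_fun c k (observe x u P) = u * (of_nat k * of_real (?m / cmod u / (2 * real c)))"
    using assms by (simp add: scatter_fun_def card_observe min_dist_observe)
  also have "cmod \<dots> = cmod u * (real k * (?m / cmod u / (2 * real c)))"
    unfolding norm_mult norm_of_nat norm_of_real using \<open>0 < ?m\<close> by simp
  also have "\<dots> = real k * ?m / (2 * real c)"
    using assms(1) by (simp add: field_simps)
  finally show ?thesis .
qed

lemma set_config: "set_mset (config n p) = p ` {0..<n}"
  by (simp add: config_def)

context
  fixes n c :: nat and A :: "nat \<Rightarrow> target_fun" and u p0 :: "nat \<Rightarrow> complex"
    and act :: "nat \<Rightarrow> nat set" and K :: "nat \<Rightarrow> nat"
  assumes n_pos: "1 \<le> n" and units: "\<And>i. i < n \<Longrightarrow> u i \<noteq> 0"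
    and A_K: "\<And>i. i < n \<Longrightarrow> A i = scatter_fun c (K i)"
    and K_onto: "K ` {0..<n} = {0..<c}"
begin

abbreviation pos where "pos \<equiv> exec n A u p0 act"

abbreviation occupied where "occupied t \<equiv> pos t ` {0..<n}"

definition move :: "nat \<Rightarrow> nat \<Rightarrow> complex" where
  "move t i = (if i \<in> act t
     then u i * scatter_fun c (K i) (observe (pos t i) (u i) (config n (pos t))) else 0)"

lemma pos_Suc: "i < n \<Longrightarrow> pos (Suc t) i = pos t i + move t i"
  by (simp add: move_def A_K)

lemma K_less: "i < n \<Longrightarrow> K i < c"
  using K_onto by auto

lemma card_occupied_pos: "1 \<le> card (occupied t)"
  using n_pos by (simp add: Suc_le_eq card_gt_0_iff)

lemma move_scattered: "c \<le> card (occupied t) \<Longrightarrow> i < n \<Longrightarrow> move t i = 0"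
  by (simp add: move_def scatter_fun_displ_scattered units set_config)

lemma move_gathered:
  "card (occupied t) < c \<Longrightarrow> card (occupied t) = 1 \<Longrightarrow> i < n \<Longrightarrow>
   move t i = (if i \<in> act t then u i * of_nat (K i) else 0)"
  by (simp add: move_def scatter_fun_displ_gathered units set_config)

lemma norm_move:
  "card (occupied t) < c \<Longrightarrow> 2 \<le> card (occupied t) \<Longrightarrow> i < n \<Longrightarrow>
   cmod (move t i) = (if i \<in> act t then real (K i) * min_dist (occupied t) / (2 * real c) else 0)"
  by (simp add: move_def norm_scatter_fun_displ units set_config)

lemma norm_move_less:
  assumes "card (occupied t) < c" "2 \<le> card (occupied t)" "i < n"
  shows "cmod (move t i) < min_dist (occupied t) / 2"
proof -
  have "0 < min_dist (occupied t)"
    using assms(2) by (intro min_dist_pos) auto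
  moreover have "real (K i) < real c"
    using K_less assms(3) by simp
  ultimately have "real (K i) * min_dist (occupied t) / (2 * real c) < min_dist (occupied t) / 2"
    by (simp add: field_simps)
  then show ?thesis
    using assms \<open>0 < min_dist (occupied t)\<close> by (simp add: norm_move)
qed

lemma no_merge:
  assumes ij: "i < n" "j < n" and eq: "pos (Suc t) i = pos (Suc t) j"
  shows "pos t i = pos t j"
proof (rule ccontr)
  assume ne: "pos t i \<noteq> pos t j"
  have moves: "pos t i + move t i = pos t j + move t j"
    using eq by (simp only: pos_Suc ij)
  have "{pos t i, pos t j} \<subseteq> occupied t"
    using ij by auto
  then have two: "2 \<le> card (occupied t)"
    using ne card_mono[of "occupied t" "{pos t i, pos t j}"] by simp
  show False
  proof (cases "c \<le> card (occupied t)")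
    case True
    then show False using moves ne ij by (simp add: move_scattered)
  next
    case False
    have "pos t i - pos t j = move t j - move t i"
      using moves by (simp add: algebra_simps)
    then have "min_dist (occupied t) \<le> cmod (move t j - move t i)"
      using ij ne min_dist_le_dist[of "occupied t" "pos t i" "pos t j"] by (simp add: dist_norm)
    also have "\<dots> \<le> cmod (move t j) + cmod (move t i)"
      by (rule norm_triangle_ineq4)
    also have "\<dots> < min_dist (occupied t)"
      using False norm_move_less[of t i] norm_move_less[of t j] ij two by simp
    finally show False by simp
  qed
qed

lemma colocated_before:
  assumes "t \<le> s" "i < n" "j < n" "pos s i = pos s j"
  shows "pos t i = pos t j"
  using assms(1,4)
proof (induction s rule: dec_induct)
  case (step s)
  then show ?case using no_merge assms(2,3) by blast
qed

lemma card_occupied_mono: "t \<le> s \<Longrightarrow> card (occupied t) \<le> card (occupied s)"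
  by (rule card_image_le_if_factors) (auto intro: colocated_before)

lemma card_occupied_less_if_split:
  assumes "t \<le> s" "i < n" "j < n" "pos t i = pos t j" "pos s i \<noteq> pos s j"
  shows "card (occupied t) < card (occupied s)"
  using assms by (intro card_image_less_if_factors[of _ _ _ i j]) (auto intro: colocated_before)

text \<open>
  When all robots are gathered, the moves of different robots point along unrelated local
  axes, so a split is only guaranteed against a robot of class 0, which stays put.
\<close>

lemma split_colocated:
  assumes ij: "i < n" "j < n" and eq: "pos t i = pos t j" and "i \<in> act t"
    and "card (occupied t) < c" and "0 < K i" "K i \<noteq> K j"
    and "K j = 0 \<or> 2 \<le> card (occupied t)"
  shows "pos (Suc t) i \<noteq> pos (Suc t) j"
proof -
  have "move t i \<noteq> move t j"
  proof (cases "2 \<le> card (occupied t)")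
    case True
    let ?m = "min_dist (occupied t)"
    have "0 < ?m"
      using True by (intro min_dist_pos) auto
    then have "real (K i) * ?m / (2 * real c) \<notin> {real (K j) * ?m / (2 * real c), 0}"
      using assms(5-7) by (auto simp: field_simps)
    moreover have "cmod (move t i) = real (K i) * ?m / (2 * real c)"
      using norm_move[OF assms(5) True ij(1)] \<open>i \<in> act t\<close> by simp
    moreover have "cmod (move t j) \<in> {real (K j) * ?m / (2 * real c), 0}"
      using norm_move[OF assms(5) True ij(2)] by simp
    ultimately show ?thesis
      by auto
  next
    case False
    then have "card (occupied t) = 1" "K j = 0"
      using card_occupied_pos[of t] assms(8) by auto
    then show ?thesis
      using move_gathered[OF assms(5)] ij units \<open>i \<in> act t\<close> \<open>0 < K i\<close> by simp
  qed
  then show ?thesis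
    using eq by (simp only: pos_Suc ij) simp
qed

lemma obtain_colocated_pair:
  assumes "card (occupied t) < c"
  obtains i j where "i < n" "j < n" "pos t i = pos t j" "0 < K i" "K i \<noteq> K j"
    "K j = 0 \<or> 2 \<le> card (occupied t)"
proof (cases "card (occupied t) = 1")
  case True
  then have "1 \<in> K ` {0..<n}" "0 \<in> K ` {0..<n}"
    using assms K_onto by auto
  then obtain i j where ij: "i < n" "j < n" "K i = 1" "K j = 0"
    by auto
  obtain x where "occupied t = {x}"
    using True card_1_singletonE by blast
  moreover have "pos t i \<in> occupied t" "pos t j \<in> occupied t"
    using ij(1,2) by auto
  ultimately have "pos t i = pos t j"
    by simp
  then show ?thesis
    using that ij by simp
next
  case False
  then have two: "2 \<le> card (occupied t)"
    using card_occupied_pos[of t] by linarith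
  have "\<exists>i\<in>{0..<n}. \<exists>j\<in>{0..<n}. pos t i = pos t j \<and> K i \<noteq> K j"
  proof (rule ccontr)
    assume "\<not> ?thesis"
    then have "\<And>i j. i \<in> {0..<n} \<Longrightarrow> j \<in> {0..<n} \<Longrightarrow> pos t i = pos t j \<Longrightarrow> K i = K j"
      by blast
    from card_image_le_if_factors[OF finite_atLeastLessThan this]
    have "card (K ` {0..<n}) \<le> card (occupied t)" .
    then show False
      using assms K_onto by simp
  qed
  then obtain i j where ij: "i < n" "j < n" "pos t i = pos t j" "K i \<noteq> K j"
    by auto
  show ?thesis
  proof (cases "0 < K i")
    case True
    then show ?thesis
      by (rule that[OF ij(1-3)]) (use ij(4) two in simp_all)
  next
    case False
    then show ?thesis
      by (intro that[of j i]) (use ij two in simp_all)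
  qed
qed

lemma card_occupied_increases:
  assumes "fair n act" "card (occupied t) < c"
  obtains s where "card (occupied t) < card (occupied s)"
proof -
  obtain i j where ij: "i < n" "j < n" "pos t i = pos t j" "0 < K i" "K i \<noteq> K j"
    "K j = 0 \<or> 2 \<le> card (occupied t)"
    using obtain_colocated_pair[OF assms(2)] by blast
  obtain t' where t': "t \<le> t'" "i \<in> act t'"
    using assms(1) ij(1) unfolding fair_def by blast
  show ?thesis
  proof (cases "pos t' i = pos t' j \<and> card (occupied t') < c")
    case True
    have "K j = 0 \<or> 2 \<le> card (occupied t')"
      using ij(6) card_occupied_mono[OF t'(1)] by linarith
    then have split: "pos (Suc t') i \<noteq> pos (Suc t') j"
      using split_colocated[OF ij(1,2) _ t'(2) _ ij(4,5)] True by blast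
    have "card (occupied t) < card (occupied (Suc t'))"
      by (rule card_occupied_less_if_split[OF _ ij(1-3) split]) (use t'(1) in simp)
    then show ?thesis
      by (rule that)
  next
    case False
    have "card (occupied t) < card (occupied t')"
    proof (cases "pos t' i = pos t' j")
      case True
      then show ?thesis using False assms(2) by simp
    next
      case False
      then show ?thesis by (rule card_occupied_less_if_split[OF t'(1) ij(1-3)])
    qed
    then show ?thesis
      by (rule that)
  qed
qed

lemma reaches_scattering:
  assumes "fair n act"
  shows "\<exists>t. c \<le> card (occupied t)"
proof (rule ccontr)
  assume "\<not> ?thesis"
  then have below: "card (occupied t) < c" for t
    by (simp add: not_le)
  have "\<exists>t. k \<le> card (occupied t)" for k
  proof (induction k)
    case (Suc k)
    then obtain t where "k \<le> card (occupied t)" ..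
    moreover obtain s where "card (occupied t) < card (occupied s)"
      using card_occupied_increases[OF assms below] .
    ultimately show ?case by (intro exI[of _ s]) simp
  qed simp
  then show False
    using below by (meson not_le)
qed

end

lemma scatter_fun_singleton: "2 \<le> c \<Longrightarrow> scatter_fun c k {#0#} = of_nat k"
  by (simp add: scatter_fun_def)

lemma scatter_fun_eq_iff:
  assumes "k < c" "k' < c"
  shows "scatter_fun c k = scatter_fun c k' \<longleftrightarrow> k = k'"
proof
  assume eq: "scatter_fun c k = scatter_fun c k'"
  show "k = k'"
  proof (rule ccontr)
    assume "k \<noteq> k'"
    then have "2 \<le> c" using assms by linarith
    then show False
      using eq \<open>k \<noteq> k'\<close> scatter_fun_singleton[of c k] scatter_fun_singleton[of c k'] by simp
  qed
qed simp

lemma inj_on_scatter_fun: "inj_on (scatter_fun c) {0..<c}"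
  by (rule inj_onI) (simp add: scatter_fun_eq_iff)

lemma is_algorithm_scatter_fun:
  assumes "1 \<le> c" "c \<le> n"
  shows "is_algorithm n c (scatter_fun c ` {0..<c})"
  unfolding is_algorithm_def
proof (intro conjI ballI impI)
  show "card (scatter_fun c ` {0..<c}) = c"
    using inj_on_scatter_fun by (simp add: card_image)
  fix \<phi> \<psi> assume "\<phi> \<in> scatter_fun c ` {0..<c}" "\<psi> \<in> scatter_fun c ` {0..<c}" "\<phi> \<noteq> \<psi>"
  then obtain k k' where "k < c" "k' < c" "k \<noteq> k'" "\<phi> = scatter_fun c k" "\<psi> = scatter_fun c k'"
    by fastforce
  moreover have "2 \<le> c"
    using \<open>k < c\<close> \<open>k' < c\<close> \<open>k \<noteq> k'\<close> by linarith
  ultimately show "\<exists>P. 0 \<in># P \<and> \<phi> P \<noteq> \<psi> P"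
    by (intro exI[of _ "{#0#}"]) (simp add: scatter_fun_singleton)
qed (use assms in simp_all)

lemma solves_SCT_scatter_fun:
  assumes "1 \<le> n"
  shows "solves_SCT n c (scatter_fun c ` {0..<c})"
  unfolding solves_SCT_def
proof (intro allI impI)
  fix A :: "nat \<Rightarrow> target_fun" and u p0 :: "nat \<Rightarrow> complex" and act :: "nat \<Rightarrow> nat set"
  assume A: "A ` {0..<n} = scatter_fun c ` {0..<c}" and units: "\<forall>i<n. u i \<noteq> 0"
    and fair: "fair n act"
  define K where "K i = inv_into {0..<c} (scatter_fun c) (A i)" for i
  have A_K: "A i = scatter_fun c (K i)" if "i < n" for i
  proof -
    have "A i \<in> scatter_fun c ` {0..<c}"
      using A that by auto
    then show ?thesis
      unfolding K_def by (rule f_inv_into_f[symmetric])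
  qed
  have K_onto: "K ` {0..<n} = {0..<c}"
    unfolding K_def image_image[of _ A, symmetric] A
    using inj_on_scatter_fun by (simp add: inv_into_image_cancel)
  obtain t where "c \<le> card (exec n A u p0 act t ` {0..<n})"
    using reaches_scattering[OF assms _ A_K K_onto fair] units by blast
  then show "\<exists>t. c \<le> card (set_mset (config n (exec n A u p0 act t)))"
    by (auto simp: set_config)
qed

lemma exec_eq_if_indistinguishable:
  assumes "A i = A j" "u i = u j" "p0 i = p0 j" "\<And>t. i \<in> act t \<and> i < n \<longleftrightarrow> j \<in> act t \<and> j < n"
  shows "exec n A u p0 act t i = exec n A u p0 act t j"
  by (induction t) (simp_all add: assms)

lemma obtain_assignment:
  assumes "finite \<Phi>" "\<Phi> \<noteq> {}" "card \<Phi> \<le> n"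
  obtains A :: "nat \<Rightarrow> 'a" where "A ` {0..<n} = \<Phi>"
proof -
  let ?m = "card \<Phi>"
  obtain f where f: "bij_betw f {0..<?m} \<Phi>"
    using ex_bij_betw_nat_finite[OF assms(1)] by blast
  have "0 < ?m"
    using assms(1,2) by (simp add: card_gt_0_iff)
  have onto: "(\<lambda>i. min i (?m - 1)) ` {0..<n} = {0..<?m}"
  proof (intro equalityI subsetI)
    fix k assume "k \<in> (\<lambda>i. min i (?m - 1)) ` {0..<n}"
    then show "k \<in> {0..<?m}"
      using \<open>0 < ?m\<close> by auto
  next
    fix k assume "k \<in> {0..<?m}"
    then have "k \<in> {0..<n}" "k = min k (?m - 1)"
      using assms(3) by auto
    then show "k \<in> (\<lambda>i. min i (?m - 1)) ` {0..<n}"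
      by (rule rev_image_eqI)
  qed
  have "f ` (\<lambda>i. min i (?m - 1)) ` {0..<n} = \<Phi>"
    unfolding onto using f by (simp add: bij_betw_def)
  then have "(\<lambda>i. f (min i (?m - 1))) ` {0..<n} = \<Phi>"
    by (simp add: image_image)
  then show ?thesis
    by (rule that)
qed

lemma card_le_if_solves_SCT:
  assumes "is_algorithm n m \<Phi>" "solves_SCT n c \<Phi>"
  shows "c \<le> m"
proof -
  have card_\<Phi>: "card \<Phi> = m"
    using assms(1) unfolding is_algorithm_def by auto
  have "finite \<Phi>" "\<Phi> \<noteq> {}" "card \<Phi> \<le> n"
    using assms(1) unfolding is_algorithm_def by auto
  then obtain A where A: "A ` {0..<n} = \<Phi>"
    by (rule obtain_assignment)
  let ?u = "\<lambda>_. 1" and ?p0 = "\<lambda>_. 0" and ?act = "\<lambda>_. UNIV"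
  have "fair n ?act"
    unfolding fair_def by blast
  have "\<exists>t. c \<le> card (set_mset (config n (exec n A ?u ?p0 ?act t)))"
    by (rule assms(2)[unfolded solves_SCT_def, rule_format, OF A _ \<open>fair n ?act\<close>]) simp
  then obtain t where "c \<le> card (exec n A ?u ?p0 ?act t ` {0..<n})"
    unfolding set_config ..
  also have "\<dots> \<le> card (A ` {0..<n})"
    by (intro card_image_le_if_factors finite_atLeastLessThan exec_eq_if_indistinguishable) simp_all
  finally show ?thesis
    using A card_\<Phi> by simp
qed

theorem theorem1:
  fixes n c :: nat
  assumes "1 \<le> n" and "1 \<le> c" and "c \<le> n"
  shows "(\<exists>\<Phi>. is_algorithm n c \<Phi> \<and> solves_SCT n c \<Phi>)
       \<and> (\<forall>m \<Phi>. m < c \<longrightarrow> is_algorithm n m \<Phi> \<longrightarrow> \<not> solves_SCT n c \<Phi>)"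
proof (intro conjI allI impI notI)
  show "\<exists>\<Phi>. is_algorithm n c \<Phi> \<and> solves_SCT n c \<Phi>"
    using is_algorithm_scatter_fun[OF assms(2,3)] solves_SCT_scatter_fun[OF assms(1)] by blast
next
  fix m \<Phi> assume "m < c" "is_algorithm n m \<Phi>" "solves_SCT n c \<Phi>"
  then show False
    using card_le_if_solves_SCT by fastforce
qed

end
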